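(* Fix $\alpha>1$ and parameters $\varepsilon_0,\delta_0,r,\varepsilon_1,\delta_1,\Delta^{\mathrm{disc}},\Delta>0$, and let $\phi_r$ be the weighted partition selection primitive defined from them. Let $X, X' \in \mathbb{R}_{\ge0}^U$ differ in at most one coordinate $u$, with $|X_u - X'_u| \le \Delta_\infty \le \Delta$. Then, provided $\delta_0+\delta_1\Delta_\infty^r<1$, $$\max\left\{D^{\delta}_\alpha(M_{\phi_r}(X)\|M_{\phi_r}(X')),\ D^{\delta}_\alpha(M_{\phi_r}(X')\|M_{\phi_r}(X))\right\}\le \varepsilon,$$ where $\delta = \delta_0+\delta_1\Delta_\infty^r$ and $\varepsilon = \varepsilon_0+\varepsilon_1\Delta_\infty^r$. In other words, for $\Delta_0 = 1$ and $\Delta_\infty\le\Delta$, $\phi_r$ satisfies $(\delta_0+\delta_1\Delta_\infty^r,\alpha,\varepsilon_0+\varepsilon_1\Delta_\infty^r)$-RDP.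
   Context: $\mathrm{Ber}(p)$: Bernoulli distribution. For $\alpha>1$, $D_\alpha(P\|Q)=\frac{1}{\alpha-1}\log\sum_x P(x)^\alpha Q(x)^{1-\alpha}$ and $D^\delta_\alpha(P\|Q)=\inf\{D_\alpha(P'\|Q'): P=(1-\delta)P'+\delta P'',\ Q=(1-\delta)Q'+\delta Q''\}$ over probability distributions. Define $L(q,\varepsilon,\delta) = \max\{p\in[q,1] : D^\delta_\alpha(\mathrm{Ber}(p)\|\mathrm{Ber}(q))\le\varepsilon \text{ and } D^\delta_\alpha(\mathrm{Ber}(q)\|\mathrm{Ber}(p))\le\varepsilon\}$. Let $N_{\mathrm{disc}} = \lceil \Delta/\Delta^{\mathrm{disc}}\rceil$. The discretized primitive $\psi_r:\mathbb{Z}_{\ge0}\to[0,1]$ is $\psi_r(0)=0$ and, for $n>0$, $$\psi_r(n) = \min_{i\in\{1,\dots,\min\{n,N_{\mathrm{disc}}\}\}} L\!\left(\psi_r(n-i),\ \varepsilon_0+\varepsilon_1(\Delta^{\mathrm{disc}}(i-1))^r,\ \delta_0+\delta_1(\Delta^{\mathrm{disc}}(i-1))^r\right).$$ The weighted primitive is $\phi_r(y) = \psi_r(\lfloor y/\Delta^{\mathrm{disc}}\rfloor)$ for $y\ge0$. For a weighted dataset $X\in\mathbb{R}_{\ge0}^U$, the mechanism $M_{\phi_r}(X)$ outputs the random subset of $U$ containing each $u$ independently with probability $\phi_r(X_u)$. $(\delta,\alpha,\varepsilon)$-RDP means $D^\delta_\alpha(M(X)\|M(X'))\le\varepsilon$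 for all neighboring pairs in both orders. *)

theory Defs
  imports "HOL-Probability.Probability"
begin

definition renyi_div :: "real \<Rightarrow> 'a pmf \<Rightarrow> 'a pmf \<Rightarrow> ereal" where
  "renyi_div \<alpha> P Q =
     (if (\<exists>x. pmf P x > 0 \<and> pmf Q x = 0) then \<infinity>
      else (let S = (\<integral>\<^sup>+ x. ennreal (pmf P x powr \<alpha> * pmf Q x powr (1 - \<alpha>)) \<partial>count_space UNIV)
            in if S = \<infinity> then \<infinity> else ereal (ln (enn2real S) / (\<alpha> - 1))))"

definition approx_renyi :: "real \<Rightarrow> real \<Rightarrow> 'a pmf \<Rightarrow> 'a pmf \<Rightarrow> ereal" where
  "approx_renyi \<delta> \<alpha> P Q =
     (INF t \<in> {(P', P'', Q', Q'').
                (\<forall>x. pmf P x = (1 - \<delta>) * pmf P' x + \<delta> * pmf P'' x) \<and>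
                (\<forall>x. pmf Q x = (1 - \<delta>) * pmf Q' x + \<delta> * pmf Q'' x)}.
        (case t of (P', P'', Q', Q'') \<Rightarrow> renyi_div \<alpha> P' Q'))"

definition L_fun :: "real \<Rightarrow> real \<Rightarrow> real \<Rightarrow> real \<Rightarrow> real" where
  "L_fun \<alpha> q \<epsilon> \<delta> =
     (GREATEST p. p \<in> {q..1} \<and>
        approx_renyi \<delta> \<alpha> (bernoulli_pmf p) (bernoulli_pmf q) \<le> ereal \<epsilon> \<and>
        approx_renyi \<delta> \<alpha> (bernoulli_pmf q) (bernoulli_pmf p) \<le> ereal \<epsilon>)"

definition N_disc :: "real \<Rightarrow> real \<Rightarrow> nat" where
  "N_disc \<Delta>d \<Delta> = nat \<lceil>\<Delta> / \<Delta>d\<rceil>"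

declare image_cong [fundef_cong]

function psi_r :: "real \<Rightarrow> real \<Rightarrow> real \<Rightarrow> real \<Rightarrow> real \<Rightarrow> real \<Rightarrow> real \<Rightarrow> real \<Rightarrow> nat \<Rightarrow> real" where
  "psi_r \<alpha> \<epsilon>0 \<delta>0 \<epsilon>1 \<delta>1 r \<Delta>d \<Delta> n =
     (if n = 0 then 0
      else Min ((\<lambda>i. L_fun \<alpha> (psi_r \<alpha> \<epsilon>0 \<delta>0 \<epsilon>1 \<delta>1 r \<Delta>d \<Delta> (n - i))
                       (\<epsilon>0 + \<epsilon>1 * (\<Delta>d * real (i - 1)) powr r)
                       (\<delta>0 + \<delta>1 * (\<Delta>d * real (i - 1)) powr r))
                ` {1..min n (N_disc \<Delta>d \<Delta>)}))"
  by pat_completeness auto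
termination
  by (relation "Wellfounded.measure (\<lambda>(_, _, _, _, _, _, _, _, n). n)") auto

declare image_cong [fundef_cong del]

definition phi_r :: "real \<Rightarrow> real \<Rightarrow> real \<Rightarrow> real \<Rightarrow> real \<Rightarrow> real \<Rightarrow> real \<Rightarrow> real \<Rightarrow> real \<Rightarrow> real" where
  "phi_r \<alpha> \<epsilon>0 \<delta>0 \<epsilon>1 \<delta>1 r \<Delta>d \<Delta> y = psi_r \<alpha> \<epsilon>0 \<delta>0 \<epsilon>1 \<delta>1 r \<Delta>d \<Delta> (nat \<lfloor>y / \<Delta>d\<rfloor>)"

definition mech :: "(real \<Rightarrow> real) \<Rightarrow> ('u::finite \<Rightarrow> real) \<Rightarrow> 'u set pmf" where
  "mech \<phi> X = map_pmf (\<lambda>f. {u. f u}) (Pi_pmf UNIV False (\<lambda>u. bernoulli_pmf (\<phi> (X u))))"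

end

theory Submission
  imports Defs
begin

text \<open>
  For Bernoulli distributions the \<delta>-approximate Renyi divergence is explicit: a decomposition
  Ber p = (1 - \<delta>) Ber x + \<delta> Ber z exists exactly for x between mix_lo \<delta> p and mix_hi \<delta> p,
  and the divergence of two Bernoulli distributions grows as their parameters move apart, so the
  infimum is attained at the closest endpoints. Consequently the parameters p \<ge> q admissible in
  the definition of L(q, \<epsilon>, \<delta>) form a closed interval [q, L(q, \<epsilon>, \<delta>)]: the maximum
  exists, every p between q and L is admissible, and L is monotone in \<epsilon> and \<delta>.

  By induction \<psi>_r is nondecreasing and \<psi>_r(n + k) \<le> L(\<psi>_r(n), \<epsilon>(k), \<delta>(k)) for
  1 \<le> k \<le> N_disc. Moving a weight by at most \<Delta>inf moves its discretised index by some k with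
  \<Delta>disc (k - 1) < \<Delta>inf, so the two inclusion probabilities are admissible for the budgets at
  \<Delta>inf. Finally the mechanism is a product of independent Bernoulli coordinates that differ in
  one coordinate only; a decomposition of that coordinate lifts to a decomposition of the product
  with the same Renyi divergence.
\<close>

section \<open>Renyi divergence and its \<delta>-approximation\<close>

lemma renyi_div_finite:
  fixes P Q :: "'a::finite pmf"
  shows "renyi_div \<alpha> P Q =
    (if \<exists>x. pmf P x > 0 \<and> pmf Q x = 0 then \<infinity>
     else ereal (ln (\<Sum>x\<in>UNIV. pmf P x powr \<alpha> * pmf Q x powr (1 - \<alpha>)) / (\<alpha> - 1)))"
proof -
  have "(\<integral>\<^sup>+ x. ennreal (pmf P x powr \<alpha> * pmf Q x powr (1 - \<alpha>)) \<partial>count_space UNIV)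
      = ennreal (\<Sum>x\<in>UNIV. pmf P x powr \<alpha> * pmf Q x powr (1 - \<alpha>))"
    by (simp add: nn_integral_count_space_finite sum_ennreal)
  then show ?thesis
    unfolding renyi_div_def Let_def by (simp add: sum_nonneg)
qed

lemma powr_mult_powr_one_minus: "0 \<le> (x::real) \<Longrightarrow> x powr a * x powr (1 - a) = x"
  by (cases "x = 0") (simp_all flip: powr_add)

lemma renyi_div_self:
  fixes P :: "'a::finite pmf"
  shows "renyi_div \<alpha> P P = 0"
  by (simp add: renyi_div_finite powr_mult_powr_one_minus sum_pmf_eq_1)

definition is_mixture :: "real \<Rightarrow> 'a pmf \<Rightarrow> 'a pmf \<Rightarrow> 'a pmf \<Rightarrow> bool" where
  "is_mixture \<delta> P P' P'' \<longleftrightarrow> (\<forall>x. pmf P x = (1 - \<delta>) * pmf P' x + \<delta> * pmf P'' x)"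

lemma approx_renyi_le_renyi_div:
  "is_mixture \<delta> P P' P'' \<Longrightarrow> is_mixture \<delta> Q Q' Q'' \<Longrightarrow> approx_renyi \<delta> \<alpha> P Q \<le> renyi_div \<alpha> P' Q'"
  unfolding approx_renyi_def is_mixture_def by (rule INF_lower2[of "(P', P'', Q', Q'')"]) auto

lemma le_approx_renyi:
  assumes "\<And>P' P'' Q' Q''. is_mixture \<delta> P P' P'' \<Longrightarrow> is_mixture \<delta> Q Q' Q'' \<Longrightarrow> c \<le> renyi_div \<alpha> P' Q'"
  shows "c \<le> approx_renyi \<delta> \<alpha> P Q"
  unfolding approx_renyi_def using assms by (intro INF_greatest) (auto simp: is_mixture_def)

lemma approx_renyi_le_approx_renyi:
  assumes "\<And>P' P'' Q' Q''. is_mixture \<delta> P P' P'' \<Longrightarrow> is_mixture \<delta> Q Q' Q'' \<Longrightarrow>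
    \<exists>R' R'' S' S''. is_mixture \<delta>' R R' R'' \<and> is_mixture \<delta>' S S' S'' \<and>
      renyi_div \<alpha> R' S' \<le> renyi_div \<alpha> P' Q'"
  shows "approx_renyi \<delta>' \<alpha> R S \<le> approx_renyi \<delta> \<alpha> P Q"
  using assms by (intro le_approx_renyi) (meson approx_renyi_le_renyi_div order_trans)

definition mix_pmf :: "real \<Rightarrow> 'a pmf \<Rightarrow> 'a pmf \<Rightarrow> 'a pmf" where
  "mix_pmf w A B = bernoulli_pmf w \<bind> (\<lambda>b. if b then A else B)"

lemma pmf_mix_pmf: "0 \<le> w \<Longrightarrow> w \<le> 1 \<Longrightarrow> pmf (mix_pmf w A B) x = w * pmf A x + (1 - w) * pmf B x"
  unfolding mix_pmf_def by (simp add: pmf_bind mult.commute)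

lemma is_mixture_mono:
  assumes "0 \<le> \<delta>" "\<delta> \<le> \<delta>'" "is_mixture \<delta> P P' P''"
  shows "is_mixture \<delta>' P P' (mix_pmf ((\<delta>' - \<delta>) / \<delta>') P' P'')"
proof (cases "\<delta>' = 0")
  case False
  have w: "0 \<le> (\<delta>' - \<delta>) / \<delta>'" "(\<delta>' - \<delta>) / \<delta>' \<le> 1"
    using assms False by (auto simp: divide_le_eq_1)
  show ?thesis
    unfolding is_mixture_def
  proof
    fix x
    have "(1 - \<delta>') * pmf P' x + \<delta>' * pmf (mix_pmf ((\<delta>' - \<delta>) / \<delta>') P' P'') x =
        (1 - \<delta>) * pmf P' x + \<delta> * pmf P'' x"
      using w False by (simp add: pmf_mix_pmf field_simps)
    then show "pmf P x = (1 - \<delta>') * pmf P' x + \<delta>' * pmf (mix_pmf ((\<delta>' - \<delta>) / \<delta>') P' P'') x"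
      using assms(3) by (simp add: is_mixture_def)
  qed
qed (use assms in \<open>simp add: is_mixture_def\<close>)

lemma approx_renyi_antimono:
  "0 \<le> \<delta> \<Longrightarrow> \<delta> \<le> \<delta>' \<Longrightarrow> approx_renyi \<delta>' \<alpha> P Q \<le> approx_renyi \<delta> \<alpha> P Q"
  by (rule approx_renyi_le_approx_renyi) (blast intro: is_mixture_mono)

lemma approx_renyi_self:
  fixes P :: "'a::finite pmf"
  shows "approx_renyi \<delta> \<alpha> P P \<le> 0"
proof -
  have "is_mixture \<delta> P P P"
    by (simp add: is_mixture_def algebra_simps)
  then show ?thesis
    using approx_renyi_le_renyi_div by (metis renyi_div_self)
qed

lemma approx_renyi_ge_one:
  fixes P Q :: "'a::finite pmf"
  assumes "1 \<le> \<delta>"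
  shows "approx_renyi \<delta> \<alpha> P Q \<le> 0"
proof -
  have "is_mixture \<delta> P P P"
    by (simp add: is_mixture_def algebra_simps)
  moreover have "is_mixture \<delta> Q P (mix_pmf (1 / \<delta>) Q P)"
    using assms by (simp add: is_mixture_def pmf_mix_pmf field_simps)
  ultimately show ?thesis
    using approx_renyi_le_renyi_div by (metis renyi_div_self)
qed

section \<open>Random subsets with independent memberships\<close>

definition random_subset :: "('u::finite \<Rightarrow> bool pmf) \<Rightarrow> 'u set pmf" where
  "random_subset K = map_pmf (\<lambda>f. {u. f u}) (Pi_pmf UNIV False K)"

lemma pmf_random_subset: "pmf (random_subset K) S = (\<Prod>v\<in>UNIV. pmf (K v) (v \<in> S))"
proof -
  have "inj (\<lambda>f :: 'a \<Rightarrow> bool. {u. f u})"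
    by (auto simp: inj_def fun_eq_iff set_eq_iff)
  then have "pmf (random_subset K) {u. u \<in> S} = pmf (Pi_pmf UNIV False K) (\<lambda>v. v \<in> S)"
    unfolding random_subset_def by (rule pmf_map_inj')
  then show ?thesis
    by (simp add: pmf_Pi)
qed

lemma pmf_random_subset_remove:
  "pmf (random_subset K) S = pmf (K u) (u \<in> S) * (\<Prod>v\<in>UNIV - {u}. pmf (K v) (v \<in> S))"
  unfolding pmf_random_subset by (rule prod.remove) auto

lemma map_pmf_mem_random_subset: "map_pmf (\<lambda>S. u \<in> S) (random_subset K) = K u"
  unfolding random_subset_def by (simp add: pmf.map_comp o_def Pi_pmf_component)

lemma sum_pmf_random_subset_mem:
  "(\<Sum>S\<in>UNIV. pmf (random_subset K) S * g (u \<in> S)) = (\<Sum>b\<in>UNIV. pmf (K u) b * g b)"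
proof -
  have "(\<Sum>S\<in>UNIV. pmf (random_subset K) S * g (u \<in> S)) =
      measure_pmf.expectation (map_pmf (\<lambda>S. u \<in> S) (random_subset K)) g"
    by (simp add: integral_measure_pmf[of UNIV])
  also have "\<dots> = (\<Sum>b\<in>UNIV. pmf (K u) b * g b)"
    by (simp add: map_pmf_mem_random_subset integral_measure_pmf[of UNIV])
  finally show ?thesis .
qed

lemma is_mixture_random_subset:
  assumes "is_mixture \<delta> (K u) A B"
  shows "is_mixture \<delta> (random_subset K) (random_subset (K(u := A))) (random_subset (K(u := B)))"
  unfolding is_mixture_def
proof
  fix S
  have mix: "pmf (K u) (u \<in> S) = (1 - \<delta>) * pmf A (u \<in> S) + \<delta> * pmf B (u \<in> S)"
    using assms unfolding is_mixture_def by blast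
  show "pmf (random_subset K) S =
      (1 - \<delta>) * pmf (random_subset (K(u := A))) S + \<delta> * pmf (random_subset (K(u := B))) S"
    unfolding pmf_random_subset_remove[where u = u] mix by (simp add: algebra_simps)
qed

lemma sum_mem_mult_prod_remove:
  fixes K :: "'u::finite \<Rightarrow> bool pmf"
  shows "(\<Sum>S\<in>UNIV. g (u \<in> S) * (\<Prod>v\<in>UNIV - {u}. pmf (K v) (v \<in> S))) = g True + g False"
proof -
  \<comment> \<open>The product over the other coordinates is twice the pmf of a random subset whose
    u-th membership is a fair coin.\<close>
  define K' where "K' = K(u := bernoulli_pmf (1 / 2))"
  have "(\<Prod>v\<in>UNIV - {u}. pmf (K v) (v \<in> S)) = 2 * pmf (random_subset K') S" for S
    unfolding pmf_random_subset_remove[where u = u] K'_def by simp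
  then have "(\<Sum>S\<in>UNIV. g (u \<in> S) * (\<Prod>v\<in>UNIV - {u}. pmf (K v) (v \<in> S))) =
      2 * (\<Sum>S\<in>UNIV. pmf (random_subset K') S * g (u \<in> S))"
    by (simp add: sum_distrib_left algebra_simps)
  also have "\<dots> = 2 * (\<Sum>b\<in>UNIV. pmf (K' u) b * g b)"
    by (simp add: sum_pmf_random_subset_mem)
  finally show ?thesis
    unfolding K'_def by (simp add: UNIV_bool)
qed

lemma obtain_subset_prod_remove_pos:
  fixes K :: "'u::finite \<Rightarrow> bool pmf"
  obtains S where "u \<in> S \<longleftrightarrow> b" "0 < (\<Prod>v\<in>UNIV - {u}. pmf (K v) (v \<in> S))"
proof -
  have "\<exists>c. 0 < pmf (K v) c" for v
    using set_pmf_not_empty[of "K v"] by (auto simp: set_pmf_iff less_le)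
  then obtain c where c: "\<And>v. 0 < pmf (K v) (c v)"
    by metis
  show ?thesis
    by (rule that[of "{v. if v = u then b else c v}"]) (auto intro: prod_pos c)
qed

lemma pmf_random_subset_remove_agree:
  assumes "\<And>v. v \<noteq> u \<Longrightarrow> K1 v = K2 v"
  shows "pmf (random_subset K2) S = pmf (K2 u) (u \<in> S) * (\<Prod>v\<in>UNIV - {u}. pmf (K1 v) (v \<in> S))"
proof -
  have "(\<Prod>v\<in>UNIV - {u}. pmf (K2 v) (v \<in> S)) = (\<Prod>v\<in>UNIV - {u}. pmf (K1 v) (v \<in> S))"
    using assms by (intro prod.cong) auto
  then show ?thesis
    by (simp add: pmf_random_subset_remove[where u = u])
qed

lemma random_subset_support_differs_iff:
  fixes K1 K2 :: "'u::finite \<Rightarrow> bool pmf"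
  assumes "\<And>v. v \<noteq> u \<Longrightarrow> K1 v = K2 v"
  shows "(\<exists>S. pmf (random_subset K1) S > 0 \<and> pmf (random_subset K2) S = 0) \<longleftrightarrow>
    (\<exists>b. pmf (K1 u) b > 0 \<and> pmf (K2 u) b = 0)"
proof -
  define R where "R S = (\<Prod>v\<in>UNIV - {u}. pmf (K1 v) (v \<in> S))" for S
  have pmf1: "pmf (random_subset K1) S = pmf (K1 u) (u \<in> S) * R S" for S
    unfolding R_def by (rule pmf_random_subset_remove)
  have pmf2: "pmf (random_subset K2) S = pmf (K2 u) (u \<in> S) * R S" for S
    unfolding R_def by (rule pmf_random_subset_remove_agree) (use assms in auto)
  have R_nonneg: "0 \<le> R S" for S
    unfolding R_def by (intro prod_nonneg) auto
  show ?thesis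
  proof
    assume "\<exists>S. pmf (random_subset K1) S > 0 \<and> pmf (random_subset K2) S = 0"
    then obtain S where "pmf (K1 u) (u \<in> S) * R S > 0" "pmf (K2 u) (u \<in> S) * R S = 0"
      unfolding pmf1 pmf2 by blast
    then show "\<exists>b. pmf (K1 u) b > 0 \<and> pmf (K2 u) b = 0"
      using R_nonneg[of S] by (auto simp: zero_less_mult_iff)
  next
    assume "\<exists>b. pmf (K1 u) b > 0 \<and> pmf (K2 u) b = 0"
    then obtain b where "pmf (K1 u) b > 0" "pmf (K2 u) b = 0"
      by blast
    moreover obtain S where "u \<in> S \<longleftrightarrow> b" "0 < R S"
      unfolding R_def by (rule obtain_subset_prod_remove_pos)
    ultimately show "\<exists>S. pmf (random_subset K1) S > 0 \<and> pmf (random_subset K2) S = 0"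
      unfolding pmf1 pmf2 by (intro exI[of _ S]) simp
  qed
qed

lemma renyi_div_random_subset:
  fixes K1 K2 :: "'u::finite \<Rightarrow> bool pmf"
  assumes "\<And>v. v \<noteq> u \<Longrightarrow> K1 v = K2 v"
  shows "renyi_div \<alpha> (random_subset K1) (random_subset K2) = renyi_div \<alpha> (K1 u) (K2 u)"
proof -
  define R where "R S = (\<Prod>v\<in>UNIV - {u}. pmf (K1 v) (v \<in> S))" for S
  have pmf1: "pmf (random_subset K1) S = pmf (K1 u) (u \<in> S) * R S" for S
    unfolding R_def by (rule pmf_random_subset_remove)
  have pmf2: "pmf (random_subset K2) S = pmf (K2 u) (u \<in> S) * R S" for S
    unfolding R_def by (rule pmf_random_subset_remove_agree) (use assms in auto)
  have R_nonneg: "0 \<le> R S" for S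
    unfolding R_def by (intro prod_nonneg) auto
  have support: "(\<exists>S. pmf (random_subset K1) S > 0 \<and> pmf (random_subset K2) S = 0) \<longleftrightarrow>
      (\<exists>b. pmf (K1 u) b > 0 \<and> pmf (K2 u) b = 0)"
    by (rule random_subset_support_differs_iff) (use assms in auto)
  define w where "w b = pmf (K1 u) b powr \<alpha> * pmf (K2 u) b powr (1 - \<alpha>)" for b
  have "pmf (random_subset K1) S powr \<alpha> * pmf (random_subset K2) S powr (1 - \<alpha>) = w (u \<in> S) * R S" for S
    using R_nonneg[of S] powr_mult_powr_one_minus[OF R_nonneg[of S], of \<alpha>]
    unfolding pmf1 pmf2 w_def by (simp add: powr_mult algebra_simps)
  then have "(\<Sum>S\<in>UNIV. pmf (random_subset K1) S powr \<alpha> * pmf (random_subset K2) S powr (1 - \<alpha>)) =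
      (\<Sum>S\<in>UNIV. w (u \<in> S) * R S)"
    by simp
  also have "\<dots> = w True + w False"
    unfolding R_def by (rule sum_mem_mult_prod_remove)
  also have "\<dots> = (\<Sum>b\<in>UNIV. pmf (K1 u) b powr \<alpha> * pmf (K2 u) b powr (1 - \<alpha>))"
    by (simp add: w_def UNIV_bool add.commute)
  finally show ?thesis
    unfolding renyi_div_finite support by simp
qed

lemma approx_renyi_random_subset_le:
  fixes K1 K2 :: "'u::finite \<Rightarrow> bool pmf"
  assumes "\<And>v. v \<noteq> u \<Longrightarrow> K1 v = K2 v"
  shows "approx_renyi \<delta> \<alpha> (random_subset K1) (random_subset K2) \<le> approx_renyi \<delta> \<alpha> (K1 u) (K2 u)"
proof (rule approx_renyi_le_approx_renyi)
  fix A B C E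
  assume "is_mixture \<delta> (K1 u) A B" "is_mixture \<delta> (K2 u) C E"
  then have "is_mixture \<delta> (random_subset K1) (random_subset (K1(u := A))) (random_subset (K1(u := B)))"
    "is_mixture \<delta> (random_subset K2) (random_subset (K2(u := C))) (random_subset (K2(u := E)))"
    by (auto intro: is_mixture_random_subset)
  moreover have "renyi_div \<alpha> (random_subset (K1(u := A))) (random_subset (K2(u := C))) = renyi_div \<alpha> A C"
    using assms by (subst renyi_div_random_subset[where u = u]) auto
  ultimately show "\<exists>R' R'' S' S''. is_mixture \<delta> (random_subset K1) R' R'' \<and>
      is_mixture \<delta> (random_subset K2) S' S'' \<and> renyi_div \<alpha> R' S' \<le> renyi_div \<alpha> A C"
    by (metis order_refl)
qed

section \<open>Bernoulli distributions\<close>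

definition bernoulli_renyi_sum :: "real \<Rightarrow> real \<Rightarrow> real \<Rightarrow> real" where
  "bernoulli_renyi_sum \<alpha> x y = x powr \<alpha> * y powr (1 - \<alpha>) + (1 - x) powr \<alpha> * (1 - y) powr (1 - \<alpha>)"

lemma bernoulli_renyi_sum_pos: "0 < x \<Longrightarrow> 0 < y \<Longrightarrow> 0 < bernoulli_renyi_sum \<alpha> x y"
  unfolding bernoulli_renyi_sum_def by (intro add_pos_nonneg) auto

lemma powr_mult_powr_neg_ratio:
  "0 \<le> (x::real) \<Longrightarrow> 0 < y \<Longrightarrow> x powr a * y powr (- a) = (x / y) powr a"
  by (simp add: powr_minus_divide powr_divide)

lemma bernoulli_renyi_sum_mono_left:
  assumes "\<alpha> > 1" "0 < y" "y < 1" "y \<le> x" "x \<le> x'" "x' \<le> 1"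
  shows "bernoulli_renyi_sum \<alpha> x y \<le> bernoulli_renyi_sum \<alpha> x' y"
proof -
  let ?f = "\<lambda>t. bernoulli_renyi_sum \<alpha> t y"
  have "?f x \<le> ?f x'"
  proof (rule DERIV_nonneg_imp_increasing_open[OF \<open>x \<le> x'\<close>])
    fix t assume t: "x < t" "t < x'"
    have "0 < t" "0 < 1 - t" using t assms by auto
    then have "DERIV ?f t :> \<alpha> * ((t / y) powr (\<alpha> - 1) - ((1 - t) / (1 - y)) powr (\<alpha> - 1))"
      unfolding bernoulli_renyi_sum_def using assms
      by (auto intro!: derivative_eq_intros has_real_derivative_powr
          simp: powr_mult_powr_neg_ratio[symmetric] algebra_simps)
    moreover have "((1 - t) / (1 - y)) powr (\<alpha> - 1) \<le> 1" "1 \<le> (t / y) powr (\<alpha> - 1)"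
      using t assms by (auto intro!: powr_le1 ge_one_powr_ge_zero simp: field_simps)
    ultimately show "\<exists>d. DERIV ?f t :> d \<and> 0 \<le> d"
      using assms by (intro exI conjI) auto
  next
    show "continuous_on {x..x'} ?f"
      unfolding bernoulli_renyi_sum_def using assms
      by (intro continuous_intros continuous_on_powr') auto
  qed
  then show ?thesis .
qed

lemma bernoulli_renyi_sum_antimono_right:
  assumes "\<alpha> > 1" "0 < y'" "y' \<le> y" "y < 1" "y \<le> x" "x \<le> 1"
  shows "bernoulli_renyi_sum \<alpha> x y \<le> bernoulli_renyi_sum \<alpha> x y'"
proof -
  let ?g = "\<lambda>s. bernoulli_renyi_sum \<alpha> x s"
  have "?g y \<le> ?g y'"
  proof (rule DERIV_nonpos_imp_decreasing_open[OF \<open>y' \<le> y\<close>])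
    fix s assume s: "y' < s" "s < y"
    have "0 < s" "0 < 1 - s" using s assms by auto
    then have "DERIV ?g s :> (1 - \<alpha>) * ((x / s) powr \<alpha> - ((1 - x) / (1 - s)) powr \<alpha>)"
      unfolding bernoulli_renyi_sum_def using assms
      by (auto intro!: derivative_eq_intros has_real_derivative_powr
          simp: powr_mult_powr_neg_ratio[symmetric] algebra_simps)
    moreover have "((1 - x) / (1 - s)) powr \<alpha> \<le> 1" "1 \<le> (x / s) powr \<alpha>"
      using s assms by (auto intro!: powr_le1 ge_one_powr_ge_zero simp: field_simps)
    ultimately show "\<exists>d. DERIV ?g s :> d \<and> d \<le> 0"
      using assms by (intro exI conjI) (auto simp: mult_nonpos_nonneg)
  next
    show "continuous_on {y'..y} ?g"
      unfolding bernoulli_renyi_sum_def using assms by (intro continuous_intros) auto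
  qed
  then show ?thesis .
qed

lemma bernoulli_renyi_sum_unbounded:
  assumes "\<alpha> > 1" "0 < b" "b < 1"
  obtains \<eta> where "0 < \<eta>" "\<eta> \<le> (1 - b) / 2" "\<And>x. 1 - \<eta> < x \<Longrightarrow> x < 1 \<Longrightarrow> E < bernoulli_renyi_sum \<alpha> b x"
proof -
  define c where "c = (1 - b) powr \<alpha>"
  define K where "K = max E 0 / c + 1"
  define \<eta> where "\<eta> = min ((1 - b) / 2) (K powr (1 / (1 - \<alpha>)))"
  have c: "0 < c" and K: "0 < K"
    using assms unfolding c_def K_def by (auto intro: add_nonneg_pos)
  show ?thesis
  proof (rule that[of \<eta>])
    show "0 < \<eta>"
      using assms K unfolding \<eta>_def by auto
    show "\<eta> \<le> (1 - b) / 2"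
      unfolding \<eta>_def by (rule min.cobounded1)
    fix x assume x: "1 - \<eta> < x" "x < 1"
    have "K = (K powr (1 / (1 - \<alpha>))) powr (1 - \<alpha>)"
      using K assms by (simp add: powr_powr)
    also have "\<dots> < (1 - x) powr (1 - \<alpha>)"
      using x assms unfolding \<eta>_def by (intro powr_less_mono2_neg) auto
    finally have "c * K < c * (1 - x) powr (1 - \<alpha>)"
      using c by simp
    moreover have "c * K = max E 0 + c"
      using c unfolding K_def by (simp add: field_simps)
    moreover have "c * (1 - x) powr (1 - \<alpha>) \<le> bernoulli_renyi_sum \<alpha> b x"
      unfolding bernoulli_renyi_sum_def c_def by simp
    ultimately show "E < bernoulli_renyi_sum \<alpha> b x"
      using c by linarith
  qed
qed

lemma renyi_div_bernoulli:
  assumes "0 \<le> x" "x \<le> 1" "0 \<le> y" "y \<le> 1"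
  shows "renyi_div \<alpha> (bernoulli_pmf x) (bernoulli_pmf y) =
    (if (0 < x \<and> y = 0) \<or> (x < 1 \<and> y = 1) then \<infinity>
     else ereal (ln (bernoulli_renyi_sum \<alpha> x y) / (\<alpha> - 1)))"
  using assms unfolding renyi_div_finite bernoulli_renyi_sum_def
  by (simp add: UNIV_bool ex_bool_eq add.commute)

lemma renyi_div_bernoulli_compl:
  assumes "0 \<le> x" "x \<le> 1" "0 \<le> y" "y \<le> 1"
  shows "renyi_div \<alpha> (bernoulli_pmf (1 - x)) (bernoulli_pmf (1 - y)) =
    renyi_div \<alpha> (bernoulli_pmf x) (bernoulli_pmf y)"
  using assms by (simp add: renyi_div_bernoulli bernoulli_renyi_sum_def add.commute)

lemma renyi_div_bernoulli_le_iff: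
  assumes "\<alpha> > 1" "0 < x" "x < 1" "0 < y" "y < 1"
  shows "renyi_div \<alpha> (bernoulli_pmf x) (bernoulli_pmf y) \<le> ereal e \<longleftrightarrow>
    bernoulli_renyi_sum \<alpha> x y \<le> exp ((\<alpha> - 1) * e)"
proof -
  have "renyi_div \<alpha> (bernoulli_pmf x) (bernoulli_pmf y) \<le> ereal e \<longleftrightarrow>
      ln (bernoulli_renyi_sum \<alpha> x y) \<le> (\<alpha> - 1) * e"
    using assms by (simp add: renyi_div_bernoulli pos_divide_le_eq mult.commute)
  also have "\<dots> \<longleftrightarrow> bernoulli_renyi_sum \<alpha> x y \<le> exp ((\<alpha> - 1) * e)"
    using assms bernoulli_renyi_sum_pos[of x y \<alpha>] by (metis exp_le_cancel_iff exp_ln)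
  finally show ?thesis .
qed

lemma renyi_div_bernoulli_mono_above:
  assumes "\<alpha> > 1" "0 \<le> y'" "y' \<le> y" "y < x" "x \<le> x'" "x' \<le> 1"
  shows "renyi_div \<alpha> (bernoulli_pmf x) (bernoulli_pmf y) \<le>
    renyi_div \<alpha> (bernoulli_pmf x') (bernoulli_pmf y')"
proof (cases "y' = 0")
  case False
  then have "bernoulli_renyi_sum \<alpha> x y \<le> bernoulli_renyi_sum \<alpha> x' y"
    "bernoulli_renyi_sum \<alpha> x' y \<le> bernoulli_renyi_sum \<alpha> x' y'"
    using assms by (auto intro: bernoulli_renyi_sum_mono_left bernoulli_renyi_sum_antimono_right)
  then have "ln (bernoulli_renyi_sum \<alpha> x y) \<le> ln (bernoulli_renyi_sum \<alpha> x' y')"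
    using assms False bernoulli_renyi_sum_pos[of x y \<alpha>] by simp
  then show ?thesis
    using assms False by (simp add: renyi_div_bernoulli divide_right_mono)
qed (use assms in \<open>simp add: renyi_div_bernoulli\<close>)

lemma renyi_div_bernoulli_mono_below:
  assumes "\<alpha> > 1" "0 \<le> x'" "x' \<le> x" "x < y" "y \<le> y'" "y' \<le> 1"
  shows "renyi_div \<alpha> (bernoulli_pmf x) (bernoulli_pmf y) \<le>
    renyi_div \<alpha> (bernoulli_pmf x') (bernoulli_pmf y')"
  using renyi_div_bernoulli_mono_above[of \<alpha> "1 - y'" "1 - y" "1 - x" "1 - x'"] assms
  by (simp add: renyi_div_bernoulli_compl)

lemma bool_pmf_eq_bernoulli: "P = bernoulli_pmf (pmf P True)"
proof (rule pmf_eqI)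
  fix b
  show "pmf P b = pmf (bernoulli_pmf (pmf P True)) b"
    by (cases b) (simp_all add: pmf_False_conv_True pmf_le_1)
qed

text \<open>Ber p = (1 - \<delta>) Ber x + \<delta> Ber z holds for some z \<in> [0, 1] iff
  mix_lo \<delta> p \<le> x \<le> mix_hi \<delta> p (for 0 < \<delta> < 1).\<close>

definition mix_lo :: "real \<Rightarrow> real \<Rightarrow> real" where
  "mix_lo \<delta> p = max 0 ((p - \<delta>) / (1 - \<delta>))"

definition mix_hi :: "real \<Rightarrow> real \<Rightarrow> real" where
  "mix_hi \<delta> p = min 1 (p / (1 - \<delta>))"

lemma mix_lo_mix_hi_bounds:
  assumes "0 < \<delta>" "\<delta> < 1" "0 \<le> p" "p \<le> 1"
  shows "0 \<le> mix_lo \<delta> p" "mix_lo \<delta> p \<le> p" "p \<le> mix_hi \<delta> p" "mix_hi \<delta> p \<le> 1"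
  using assms unfolding mix_lo_def mix_hi_def by (auto simp: field_simps)

lemma mix_lo_mono: "\<delta> < 1 \<Longrightarrow> p \<le> p' \<Longrightarrow> mix_lo \<delta> p \<le> mix_lo \<delta> p'"
  unfolding mix_lo_def by (intro max.mono) (auto intro: divide_right_mono)

lemma is_mixture_bernoulli:
  assumes "0 < \<delta>" "\<delta> < 1" "0 \<le> p" "p \<le> 1" "mix_lo \<delta> p \<le> x" "x \<le> mix_hi \<delta> p"
  shows "is_mixture \<delta> (bernoulli_pmf p) (bernoulli_pmf x) (bernoulli_pmf ((p - (1 - \<delta>) * x) / \<delta>))"
proof -
  have x: "0 \<le> x" "x \<le> 1" "(1 - \<delta>) * x \<le> p" "p - \<delta> \<le> (1 - \<delta>) * x"
    using assms unfolding mix_lo_def mix_hi_def by (auto simp: field_simps)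
  then have z: "0 \<le> (p - (1 - \<delta>) * x) / \<delta>" "(p - (1 - \<delta>) * x) / \<delta> \<le> 1"
    using assms by (auto simp: field_simps)
  show ?thesis
    unfolding is_mixture_def
  proof
    fix b
    show "pmf (bernoulli_pmf p) b =
        (1 - \<delta>) * pmf (bernoulli_pmf x) b + \<delta> * pmf (bernoulli_pmf ((p - (1 - \<delta>) * x) / \<delta>)) b"
      using x z assms by (cases b) (simp_all add: field_simps)
  qed
qed

lemma is_mixture_bernoulli_bounds:
  assumes "0 < \<delta>" "\<delta> < 1" "is_mixture \<delta> (bernoulli_pmf p) P' P''" "0 \<le> p" "p \<le> 1"
  shows "mix_lo \<delta> p \<le> pmf P' True" "pmf P' True \<le> mix_hi \<delta> p"
proof -
  have "p = (1 - \<delta>) * pmf P' True + \<delta> * pmf P'' True"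
    using assms unfolding is_mixture_def by (metis pmf_bernoulli_True)
  moreover have "0 \<le> pmf P' True" "pmf P' True \<le> 1" "0 \<le> pmf P'' True" "pmf P'' True \<le> 1"
    by (auto simp: pmf_le_1)
  ultimately show "mix_lo \<delta> p \<le> pmf P' True" "pmf P' True \<le> mix_hi \<delta> p"
    using assms unfolding mix_lo_def mix_hi_def by (auto simp: field_simps)
qed

lemma approx_renyi_bernoulli_le:
  assumes "0 < \<delta>" "\<delta> < 1" "0 \<le> p" "p \<le> 1" "0 \<le> q" "q \<le> 1"
    "mix_lo \<delta> p \<le> x" "x \<le> mix_hi \<delta> p" "mix_lo \<delta> q \<le> y" "y \<le> mix_hi \<delta> q"
  shows "approx_renyi \<delta> \<alpha> (bernoulli_pmf p) (bernoulli_pmf q) \<le>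
    renyi_div \<alpha> (bernoulli_pmf x) (bernoulli_pmf y)"
  by (rule approx_renyi_le_renyi_div[OF is_mixture_bernoulli is_mixture_bernoulli]) (use assms in auto)

lemma le_approx_renyi_bernoulli:
  assumes "0 < \<delta>" "\<delta> < 1" "0 \<le> p" "p \<le> 1" "0 \<le> q" "q \<le> 1"
    and "\<And>x y. mix_lo \<delta> p \<le> x \<Longrightarrow> x \<le> mix_hi \<delta> p \<Longrightarrow> mix_lo \<delta> q \<le> y \<Longrightarrow> y \<le> mix_hi \<delta> q \<Longrightarrow>
      c \<le> renyi_div \<alpha> (bernoulli_pmf x) (bernoulli_pmf y)"
  shows "c \<le> approx_renyi \<delta> \<alpha> (bernoulli_pmf p) (bernoulli_pmf q)"
proof (rule le_approx_renyi)
  fix P' P'' Q' Q''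
  assume "is_mixture \<delta> (bernoulli_pmf p) P' P''" "is_mixture \<delta> (bernoulli_pmf q) Q' Q''"
  then have "c \<le> renyi_div \<alpha> (bernoulli_pmf (pmf P' True)) (bernoulli_pmf (pmf Q' True))"
    using assms by (intro assms(7) is_mixture_bernoulli_bounds) auto
  then show "c \<le> renyi_div \<alpha> P' Q'"
    by (simp flip: bool_pmf_eq_bernoulli)
qed

lemma approx_renyi_bernoulli_overlap:
  assumes "0 < \<delta>" "\<delta> < 1" "0 \<le> p" "p \<le> 1" "0 \<le> q" "q \<le> 1"
    "mix_lo \<delta> p \<le> mix_hi \<delta> q" "mix_lo \<delta> q \<le> mix_hi \<delta> p"
  shows "approx_renyi \<delta> \<alpha> (bernoulli_pmf p) (bernoulli_pmf q) \<le> 0"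
proof -
  define z where "z = max (mix_lo \<delta> p) (mix_lo \<delta> q)"
  have "approx_renyi \<delta> \<alpha> (bernoulli_pmf p) (bernoulli_pmf q) \<le>
      renyi_div \<alpha> (bernoulli_pmf z) (bernoulli_pmf z)"
    using assms mix_lo_mix_hi_bounds[of \<delta> p] mix_lo_mix_hi_bounds[of \<delta> q]
    unfolding z_def by (intro approx_renyi_bernoulli_le) auto
  then show ?thesis
    by (simp add: renyi_div_self)
qed

lemma approx_renyi_bernoulli_separated:
  assumes "\<alpha> > 1" "0 < \<delta>" "\<delta> < 1" "0 \<le> q" "p \<le> 1" "mix_hi \<delta> q < mix_lo \<delta> p"
  shows "approx_renyi \<delta> \<alpha> (bernoulli_pmf p) (bernoulli_pmf q) =
      renyi_div \<alpha> (bernoulli_pmf (mix_lo \<delta> p)) (bernoulli_pmf (mix_hi \<delta> q))"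
    and "approx_renyi \<delta> \<alpha> (bernoulli_pmf q) (bernoulli_pmf p) =
      renyi_div \<alpha> (bernoulli_pmf (mix_hi \<delta> q)) (bernoulli_pmf (mix_lo \<delta> p))"
proof -
  have "0 \<le> mix_hi \<delta> q" "mix_lo \<delta> p \<le> 1"
    using assms unfolding mix_lo_def mix_hi_def by (auto simp: field_simps)
  then have "0 < (p - \<delta>) / (1 - \<delta>)" "q / (1 - \<delta>) < 1"
    using assms(6) unfolding mix_lo_def mix_hi_def by auto
  then have "0 \<le> p" "q \<le> 1"
    using assms by (auto simp: field_simps)
  note bounds = assms this mix_lo_mix_hi_bounds[of \<delta> p] mix_lo_mix_hi_bounds[of \<delta> q]
  show "approx_renyi \<delta> \<alpha> (bernoulli_pmf p) (bernoulli_pmf q) =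
      renyi_div \<alpha> (bernoulli_pmf (mix_lo \<delta> p)) (bernoulli_pmf (mix_hi \<delta> q))"
    using bounds
    by (intro antisym approx_renyi_bernoulli_le le_approx_renyi_bernoulli
        renyi_div_bernoulli_mono_above) auto
  show "approx_renyi \<delta> \<alpha> (bernoulli_pmf q) (bernoulli_pmf p) =
      renyi_div \<alpha> (bernoulli_pmf (mix_hi \<delta> q)) (bernoulli_pmf (mix_lo \<delta> p))"
    using bounds
    by (intro antisym approx_renyi_bernoulli_le le_approx_renyi_bernoulli
        renyi_div_bernoulli_mono_below) auto
qed

section \<open>The maximal admissible parameter L\<close>

definition L_admissible :: "real \<Rightarrow> real \<Rightarrow> real \<Rightarrow> real \<Rightarrow> real \<Rightarrow> bool" where
  "L_admissible \<alpha> q \<epsilon> \<delta> p \<longleftrightarrow> p \<in> {q..1} \<and>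
     approx_renyi \<delta> \<alpha> (bernoulli_pmf p) (bernoulli_pmf q) \<le> ereal \<epsilon> \<and>
     approx_renyi \<delta> \<alpha> (bernoulli_pmf q) (bernoulli_pmf p) \<le> ereal \<epsilon>"

definition renyi_sublevel :: "real \<Rightarrow> real \<Rightarrow> real \<Rightarrow> real set" where
  "renyi_sublevel \<alpha> \<epsilon> b = {x \<in> {0..1}. x \<le> b \<or>
     (renyi_div \<alpha> (bernoulli_pmf x) (bernoulli_pmf b) \<le> ereal \<epsilon> \<and>
      renyi_div \<alpha> (bernoulli_pmf b) (bernoulli_pmf x) \<le> ereal \<epsilon>)}"

lemma L_admissible_iff_renyi_sublevel:
  assumes "\<alpha> > 1" "0 \<le> \<epsilon>" "0 < \<delta>" "\<delta> < 1" "0 \<le> q" "q \<le> 1"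
  shows "L_admissible \<alpha> q \<epsilon> \<delta> p \<longleftrightarrow> p \<in> {q..1} \<and> mix_lo \<delta> p \<in> renyi_sublevel \<alpha> \<epsilon> (mix_hi \<delta> q)"
proof (cases "p \<in> {q..1}")
  case True
  then have bounds: "0 \<le> mix_lo \<delta> p" "mix_lo \<delta> p \<le> 1" "mix_lo \<delta> q \<le> mix_lo \<delta> p"
    "mix_lo \<delta> p \<le> mix_hi \<delta> p"
    using assms mix_lo_mix_hi_bounds[of \<delta> p] by (auto intro: mix_lo_mono)
  show ?thesis
  proof (cases "mix_lo \<delta> p \<le> mix_hi \<delta> q")
    case overlap: True
    have "approx_renyi \<delta> \<alpha> (bernoulli_pmf p) (bernoulli_pmf q) \<le> 0"
      "approx_renyi \<delta> \<alpha> (bernoulli_pmf q) (bernoulli_pmf p) \<le> 0"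
      using assms True bounds overlap by (auto intro!: approx_renyi_bernoulli_overlap)
    moreover have "(0::ereal) \<le> ereal \<epsilon>"
      using assms by simp
    ultimately have "L_admissible \<alpha> q \<epsilon> \<delta> p"
      using True unfolding L_admissible_def by (blast intro: order_trans)
    moreover have "mix_lo \<delta> p \<in> renyi_sublevel \<alpha> \<epsilon> (mix_hi \<delta> q)"
      using bounds overlap unfolding renyi_sublevel_def by simp
    ultimately show ?thesis
      using True by blast
  next
    case False
    then have "mix_hi \<delta> q < mix_lo \<delta> p"
      by simp
    moreover have "p \<le> 1"
      using True by simp
    ultimately show ?thesis
      using True bounds False approx_renyi_bernoulli_separated[OF assms(1,3,4,5)]
      unfolding L_admissible_def renyi_sublevel_def by simp
  qed
qed (auto simp: L_admissible_def)

lemma renyi_sublevel_downward_closed: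
  assumes "\<alpha> > 1" "0 \<le> b" "0 \<le> x" "x \<le> x'" "x' \<in> renyi_sublevel \<alpha> \<epsilon> b"
  shows "x \<in> renyi_sublevel \<alpha> \<epsilon> b"
proof (cases "x \<le> b")
  case False
  then have "renyi_div \<alpha> (bernoulli_pmf x) (bernoulli_pmf b) \<le>
      renyi_div \<alpha> (bernoulli_pmf x') (bernoulli_pmf b)"
    "renyi_div \<alpha> (bernoulli_pmf b) (bernoulli_pmf x) \<le>
      renyi_div \<alpha> (bernoulli_pmf b) (bernoulli_pmf x')"
    using assms unfolding renyi_sublevel_def
    by (auto intro: renyi_div_bernoulli_mono_above renyi_div_bernoulli_mono_below)
  then show ?thesis
    using assms unfolding renyi_sublevel_def by (auto intro: order_trans)
qed (use assms in \<open>auto simp: renyi_sublevel_def\<close>)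

lemma closed_renyi_sublevel:
  assumes "\<alpha> > 1" "0 \<le> b" "b \<le> 1"
  shows "closed (renyi_sublevel \<alpha> \<epsilon> b)"
proof -
  consider "b = 0" | "b = 1" | "0 < b" "b < 1"
    using assms by linarith
  then show ?thesis
  proof cases
    case 1
    then have "renyi_sublevel \<alpha> \<epsilon> b = {0}"
      unfolding renyi_sublevel_def by (auto simp: renyi_div_bernoulli split: if_split_asm)
    then show ?thesis
      by simp
  next
    case 2
    then have "renyi_sublevel \<alpha> \<epsilon> b = {0..1}"
      unfolding renyi_sublevel_def by auto
    then show ?thesis
      by simp
  next
    case 3
    \<comment> \<open>The divergence from Ber b blows up as x \<rightarrow> 1, so the sublevel set avoids a neighbourhood
      of 1 and is cut out by continuous functions on a compact interval.\<close>
    define E where "E = exp ((\<alpha> - 1) * \<epsilon>)"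
    obtain \<eta> where \<eta>: "0 < \<eta>" "\<eta> \<le> (1 - b) / 2"
      and blowup: "\<And>x. 1 - \<eta> < x \<Longrightarrow> x < 1 \<Longrightarrow> E < bernoulli_renyi_sum \<alpha> b x"
      using bernoulli_renyi_sum_unbounded[OF assms(1) 3] by blast
    let ?f = "\<lambda>x. bernoulli_renyi_sum \<alpha> x b" and ?g = "\<lambda>x. bernoulli_renyi_sum \<alpha> b x"
    have in_sublevel_iff: "x \<in> renyi_sublevel \<alpha> \<epsilon> b \<longleftrightarrow>
        x \<in> {0..b} \<or> (x \<in> {b..1 - \<eta>} \<and> ?f x \<le> E \<and> ?g x \<le> E)" for x
    proof (cases "b < x \<and> x < 1")
      case True
      then have "x \<in> renyi_sublevel \<alpha> \<epsilon> b \<longleftrightarrow> ?f x \<le> E \<and> ?g x \<le> E"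
        using assms 3 unfolding renyi_sublevel_def E_def by (auto simp: renyi_div_bernoulli_le_iff)
      moreover have "?g x \<le> E \<Longrightarrow> x \<le> 1 - \<eta>"
        using blowup[of x] True by force
      ultimately show ?thesis
        using True \<eta> by auto
    next
      case False
      then show ?thesis
        using 3 \<eta> unfolding renyi_sublevel_def by (auto simp: renyi_div_bernoulli split: if_split_asm)
    qed
    have "continuous_on {b..1 - \<eta>} ?f" "continuous_on {b..1 - \<eta>} ?g"
      unfolding bernoulli_renyi_sum_def using 3 \<eta> by (auto intro!: continuous_intros)
    then have "closed ({0..b} \<union> ({b..1 - \<eta>} \<inter> ?f -` {..E} \<inter> ({b..1 - \<eta>} \<inter> ?g -` {..E})))"
      by (intro closed_Un closed_Int continuous_closed_preimage) auto
    moreover have "renyi_sublevel \<alpha> \<epsilon> b =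
        {0..b} \<union> ({b..1 - \<eta>} \<inter> ?f -` {..E} \<inter> ({b..1 - \<eta>} \<inter> ?g -` {..E}))"
      using in_sublevel_iff by blast
    ultimately show ?thesis
      by simp
  qed
qed

lemma L_admissible_self:
  assumes "0 \<le> \<epsilon>" "0 \<le> q" "q \<le> 1"
  shows "L_admissible \<alpha> q \<epsilon> \<delta> q"
  using assms approx_renyi_self[of \<delta> \<alpha> "bernoulli_pmf q"]
  unfolding L_admissible_def by (auto intro: order_trans)

lemma L_admissible_ge_one_iff:
  assumes "0 \<le> \<epsilon>" "1 \<le> \<delta>"
  shows "L_admissible \<alpha> q \<epsilon> \<delta> p \<longleftrightarrow> p \<in> {q..1}"
proof -
  have "approx_renyi \<delta> \<alpha> P Q \<le> ereal \<epsilon>" for P Q :: "bool pmf"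
  proof -
    have "approx_renyi \<delta> \<alpha> P Q \<le> 0"
      using assms by (intro approx_renyi_ge_one)
    also have "\<dots> \<le> ereal \<epsilon>"
      using assms by simp
    finally show ?thesis .
  qed
  then show ?thesis
    unfolding L_admissible_def by simp
qed

lemma L_admissible_interval:
  assumes "\<alpha> > 1" "0 \<le> \<epsilon>" "0 < \<delta>" "0 \<le> q" "q \<le> 1"
  obtains m where "{p. L_admissible \<alpha> q \<epsilon> \<delta> p} = {q..m}"
proof (cases "\<delta> < 1")
  case False
  then have "{p. L_admissible \<alpha> q \<epsilon> \<delta> p} = {q..1}"
    using L_admissible_ge_one_iff[OF assms(2)] by (simp add: set_eq_iff)
  then show ?thesis
    by (rule that)
next
  case True
  define b where "b = mix_hi \<delta> q"
  define S where "S = {q..1} \<inter> mix_lo \<delta> -` renyi_sublevel \<alpha> \<epsilon> b"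
  have admissible_iff: "L_admissible \<alpha> q \<epsilon> \<delta> p \<longleftrightarrow> p \<in> S" for p
    unfolding S_def b_def using L_admissible_iff_renyi_sublevel[OF assms(1-3) True assms(4,5)] by simp
  have "continuous_on {q..1} (mix_lo \<delta>)"
    unfolding mix_lo_def[abs_def] using True by (intro continuous_intros) auto
  moreover have "0 \<le> b" "b \<le> 1"
    unfolding b_def using mix_lo_mix_hi_bounds[OF assms(3) True assms(4,5)] assms by auto
  ultimately have "closed S"
    unfolding S_def using closed_renyi_sublevel[OF assms(1)] by (intro continuous_closed_preimage) auto
  then have "compact ({q..1} \<inter> S)"
    by (intro compact_Int_closed) auto
  moreover have "{q..1} \<inter> S = S"
    unfolding S_def by auto
  moreover have "L_admissible \<alpha> q \<epsilon> \<delta> q"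
    using assms by (intro L_admissible_self) auto
  then have "q \<in> S"
    using admissible_iff by blast
  ultimately obtain m where m: "m \<in> S" "\<And>p. p \<in> S \<Longrightarrow> p \<le> m"
    using compact_attains_sup[of S] by auto
  have downward: "p \<in> S" if "q \<le> p" "p \<le> m" for p
  proof -
    have "mix_lo \<delta> p \<le> mix_lo \<delta> m" "0 \<le> mix_lo \<delta> p"
      using mix_lo_mono[OF True that(2)] mix_lo_mix_hi_bounds[OF assms(3) True] that m assms
      unfolding S_def by auto
    then show ?thesis
      using renyi_sublevel_downward_closed[OF assms(1) \<open>0 \<le> b\<close>] that m unfolding S_def by auto
  qed
  have "S = {q..m}"
  proof
    show "S \<subseteq> {q..m}"
      using m(2) unfolding S_def by auto
    show "{q..m} \<subseteq> S"
      using downward by auto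
  qed
  moreover have "{p. L_admissible \<alpha> q \<epsilon> \<delta> p} = S"
    unfolding admissible_iff by simp
  ultimately show ?thesis
    using that[of m] by simp
qed

lemma L_fun_eq_Greatest: "L_fun \<alpha> q \<epsilon> \<delta> = (GREATEST p. L_admissible \<alpha> q \<epsilon> \<delta> p)"
  unfolding L_fun_def L_admissible_def ..

lemma L_admissible_iff:
  assumes "\<alpha> > 1" "0 \<le> \<epsilon>" "0 < \<delta>" "0 \<le> q" "q \<le> 1"
  shows "L_admissible \<alpha> q \<epsilon> \<delta> p \<longleftrightarrow> q \<le> p \<and> p \<le> L_fun \<alpha> q \<epsilon> \<delta>"
proof -
  obtain m where m: "{p. L_admissible \<alpha> q \<epsilon> \<delta> p} = {q..m}"
    using L_admissible_interval[OF assms] .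
  then have admissible_iff: "L_admissible \<alpha> q \<epsilon> \<delta> p \<longleftrightarrow> q \<le> p \<and> p \<le> m" for p
    by (metis atLeastAtMost_iff mem_Collect_eq)
  then have "q \<le> m"
    using L_admissible_self[OF assms(2,4,5)] by blast
  then have "L_fun \<alpha> q \<epsilon> \<delta> = m"
    unfolding L_fun_eq_Greatest using admissible_iff by (intro Greatest_equality) auto
  then show ?thesis
    using admissible_iff by simp
qed

lemma L_fun_bounds:
  assumes "\<alpha> > 1" "0 \<le> \<epsilon>" "0 < \<delta>" "0 \<le> q" "q \<le> 1"
  shows "q \<le> L_fun \<alpha> q \<epsilon> \<delta>" "L_fun \<alpha> q \<epsilon> \<delta> \<le> 1"
proof -
  show "q \<le> L_fun \<alpha> q \<epsilon> \<delta>"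
    using L_admissible_iff[OF assms, of q] L_admissible_self[OF assms(2,4,5)] by blast
  then have "L_admissible \<alpha> q \<epsilon> \<delta> (L_fun \<alpha> q \<epsilon> \<delta>)"
    using L_admissible_iff[OF assms] by blast
  then show "L_fun \<alpha> q \<epsilon> \<delta> \<le> 1"
    unfolding L_admissible_def by simp
qed

lemma L_admissible_mono:
  assumes "L_admissible \<alpha> q \<epsilon> \<delta> p" "0 \<le> \<delta>" "\<delta> \<le> \<delta>'" "\<epsilon> \<le> \<epsilon>'"
  shows "L_admissible \<alpha> q \<epsilon>' \<delta>' p"
proof -
  have weaken: "approx_renyi \<delta>' \<alpha> P Q \<le> ereal \<epsilon>'"
    if "approx_renyi \<delta> \<alpha> P Q \<le> ereal \<epsilon>" for P Q :: "bool pmf"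
  proof -
    have "approx_renyi \<delta>' \<alpha> P Q \<le> approx_renyi \<delta> \<alpha> P Q"
      using assms by (intro approx_renyi_antimono)
    also have "\<dots> \<le> ereal \<epsilon>"
      by (rule that)
    also have "\<dots> \<le> ereal \<epsilon>'"
      using assms(4) by simp
    finally show ?thesis .
  qed
  then show ?thesis
    using assms(1) unfolding L_admissible_def by simp
qed

lemma L_fun_mono:
  assumes "\<alpha> > 1" "0 \<le> \<epsilon>" "0 < \<delta>" "0 \<le> q" "q \<le> 1" "\<epsilon> \<le> \<epsilon>'" "\<delta> \<le> \<delta>'"
  shows "L_fun \<alpha> q \<epsilon> \<delta> \<le> L_fun \<alpha> q \<epsilon>' \<delta>'"
proof -
  let ?p = "L_fun \<alpha> q \<epsilon> \<delta>"
  have "L_admissible \<alpha> q \<epsilon> \<delta> ?p"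
    using L_fun_bounds(1)[OF assms(1-5)] by (simp add: L_admissible_iff[OF assms(1-5)])
  then have "L_admissible \<alpha> q \<epsilon>' \<delta>' ?p"
    by (rule L_admissible_mono) (use assms in auto)
  moreover have "L_admissible \<alpha> q \<epsilon>' \<delta>' ?p \<longleftrightarrow> q \<le> ?p \<and> ?p \<le> L_fun \<alpha> q \<epsilon>' \<delta>'"
    using assms by (intro L_admissible_iff) auto
  ultimately show ?thesis
    by simp
qed

section \<open>The discretised primitive\<close>

declare psi_r.simps [simp del]

lemma one_le_N_disc:
  assumes "0 < \<Delta>d" "0 < \<Delta>"
  shows "1 \<le> N_disc \<Delta>d \<Delta>"
proof -
  have "0 < \<Delta> / \<Delta>d"
    using assms by simp
  then have "1 \<le> \<lceil>\<Delta> / \<Delta>d\<rceil>"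
    by linarith
  then show ?thesis
    unfolding N_disc_def by linarith
qed

lemma le_N_disc:
  assumes "0 < \<Delta>d" "\<Delta>d * (real k - 1) < \<Delta>"
  shows "k \<le> N_disc \<Delta>d \<Delta>"
proof -
  have "real k - 1 < \<Delta> / \<Delta>d"
    using assms by (simp add: field_simps)
  then have "int k - 1 < \<lceil>\<Delta> / \<Delta>d\<rceil>"
    by linarith
  then show ?thesis
    unfolding N_disc_def by linarith
qed

lemma nat_floor_divide_diff_less:
  assumes "0 \<le> a" "0 \<le> a'" "0 < d"
  shows "d * (real (nat \<lfloor>a' / d\<rfloor> - nat \<lfloor>a / d\<rfloor>) - 1) < \<bar>a' - a\<bar>"
proof (cases "nat \<lfloor>a / d\<rfloor> \<le> nat \<lfloor>a' / d\<rfloor>")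
  case True
  have "0 \<le> a / d" "0 \<le> a' / d"
    using assms by auto
  then have "real (nat \<lfloor>a' / d\<rfloor>) \<le> a' / d" "a / d < real (nat \<lfloor>a / d\<rfloor>) + 1"
    by (simp_all add: of_nat_nat)
  then have "real (nat \<lfloor>a' / d\<rfloor> - nat \<lfloor>a / d\<rfloor>) - 1 < (a' - a) / d"
    using True by (simp add: of_nat_diff diff_divide_distrib)
  then show ?thesis
    using assms by (simp add: field_simps)
qed (use assms in simp)

context
  fixes \<alpha> \<epsilon>0 \<delta>0 \<epsilon>1 \<delta>1 r \<Delta>d \<Delta> :: real
  assumes \<alpha>: "\<alpha> > 1" and \<epsilon>: "0 \<le> \<epsilon>0" "0 \<le> \<epsilon>1" and \<delta>: "0 < \<delta>0" "0 \<le> \<delta>1"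
    and r: "0 \<le> r" and \<Delta>: "0 < \<Delta>d" "0 < \<Delta>"
begin

abbreviation "\<psi> \<equiv> psi_r \<alpha> \<epsilon>0 \<delta>0 \<epsilon>1 \<delta>1 r \<Delta>d \<Delta>"
abbreviation "budget c0 c1 i \<equiv> c0 + c1 * (\<Delta>d * real (i - 1)) powr r"

lemma budget_mono: "0 \<le> c1 \<Longrightarrow> i \<le> j \<Longrightarrow> budget c0 c1 i \<le> budget c0 c1 j"
  using \<Delta> r by (auto intro!: mult_left_mono powr_mono2)

lemma budget_eps_nonneg: "0 \<le> budget \<epsilon>0 \<epsilon>1 i"
  using \<epsilon> by simp

lemma budget_delta_pos: "0 < budget \<delta>0 \<delta>1 i"
  using \<delta> by (simp add: add_pos_nonneg)

lemma psi_r_0: "\<psi> 0 = 0"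
  by (subst psi_r.simps) simp

lemma psi_r_le_L_fun:
  assumes "1 \<le> k" "k \<le> n" "k \<le> N_disc \<Delta>d \<Delta>"
  shows "\<psi> n \<le> L_fun \<alpha> (\<psi> (n - k)) (budget \<epsilon>0 \<epsilon>1 k) (budget \<delta>0 \<delta>1 k)"
  using assms by (subst psi_r.simps) (auto intro: Min_le)

lemma psi_r_attained:
  assumes "0 < n"
  obtains k where "1 \<le> k" "k \<le> n" "k \<le> N_disc \<Delta>d \<Delta>"
    "\<psi> n = L_fun \<alpha> (\<psi> (n - k)) (budget \<epsilon>0 \<epsilon>1 k) (budget \<delta>0 \<delta>1 k)"
proof -
  let ?K = "{1..min n (N_disc \<Delta>d \<Delta>)}"
  let ?f = "\<lambda>k. L_fun \<alpha> (\<psi> (n - k)) (budget \<epsilon>0 \<epsilon>1 k) (budget \<delta>0 \<delta>1 k)"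
  have "?K \<noteq> {}"
    using assms one_le_N_disc[OF \<Delta>] by auto
  then have "Min (?f ` ?K) \<in> ?f ` ?K"
    by (intro Min_in) auto
  moreover have "\<psi> n = Min (?f ` ?K)"
    using assms by (subst psi_r.simps) simp
  ultimately show ?thesis
    using that by auto
qed

lemma psi_r_bounds: "0 \<le> \<psi> n \<and> \<psi> n \<le> 1"
proof (induction n rule: less_induct)
  case (less n)
  show ?case
  proof (cases "n = 0")
    case True
    then show ?thesis
      by (simp add: psi_r_0)
  next
    case False
    then obtain k where k: "1 \<le> k" "k \<le> n" "\<psi> n = L_fun \<alpha> (\<psi> (n - k)) (budget \<epsilon>0 \<epsilon>1 k) (budget \<delta>0 \<delta>1 k)"
      using psi_r_attained by blast
    moreover have "0 \<le> \<psi> (n - k)" "\<psi> (n - k) \<le> 1"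
      using less.IH[of "n - k"] k by auto
    ultimately show ?thesis
      using L_fun_bounds[OF \<alpha> budget_eps_nonneg budget_delta_pos, of "\<psi> (n - k)" k k] by auto
  qed
qed

lemma psi_r_le_Suc: "\<psi> n \<le> \<psi> (Suc n)"
proof -
  obtain k where k: "1 \<le> k" "k \<le> Suc n" "k \<le> N_disc \<Delta>d \<Delta>"
    and \<psi>_Suc: "\<psi> (Suc n) = L_fun \<alpha> (\<psi> (Suc n - k)) (budget \<epsilon>0 \<epsilon>1 k) (budget \<delta>0 \<delta>1 k)"
    using psi_r_attained[of "Suc n"] by auto
  show ?thesis
  proof (cases "k = 1")
    case True
    then show ?thesis
      using \<psi>_Suc psi_r_bounds[of n] L_fun_bounds(1)[OF \<alpha> budget_eps_nonneg budget_delta_pos, of "\<psi> n" 1 1]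
      by simp
  next
    case False
    then have "\<psi> n \<le> L_fun \<alpha> (\<psi> (n - (k - 1))) (budget \<epsilon>0 \<epsilon>1 (k - 1)) (budget \<delta>0 \<delta>1 (k - 1))"
      using k by (intro psi_r_le_L_fun) auto
    also have "n - (k - 1) = Suc n - k"
      using False k by auto
    also have "L_fun \<alpha> (\<psi> (Suc n - k)) (budget \<epsilon>0 \<epsilon>1 (k - 1)) (budget \<delta>0 \<delta>1 (k - 1)) \<le>
        L_fun \<alpha> (\<psi> (Suc n - k)) (budget \<epsilon>0 \<epsilon>1 k) (budget \<delta>0 \<delta>1 k)"
      using psi_r_bounds[of "Suc n - k"] \<epsilon> \<delta>
      by (intro L_fun_mono[OF \<alpha> budget_eps_nonneg budget_delta_pos] budget_mono) auto
    finally show ?thesis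
      using \<psi>_Suc by simp
  qed
qed

lemma psi_r_mono: "m \<le> n \<Longrightarrow> \<psi> m \<le> \<psi> n"
  using lift_Suc_mono_le[of \<psi>, OF psi_r_le_Suc] .

lemma approx_renyi_psi_r_close:
  assumes "n \<le> n'" "\<Delta>d * (real (n' - n) - 1) < D" "D \<le> \<Delta>"
  shows "approx_renyi (\<delta>0 + \<delta>1 * D powr r) \<alpha> (bernoulli_pmf (\<psi> n')) (bernoulli_pmf (\<psi> n))
      \<le> ereal (\<epsilon>0 + \<epsilon>1 * D powr r)"
    and "approx_renyi (\<delta>0 + \<delta>1 * D powr r) \<alpha> (bernoulli_pmf (\<psi> n)) (bernoulli_pmf (\<psi> n'))
      \<le> ereal (\<epsilon>0 + \<epsilon>1 * D powr r)"
proof -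
  have "L_admissible \<alpha> (\<psi> n) (\<epsilon>0 + \<epsilon>1 * D powr r) (\<delta>0 + \<delta>1 * D powr r) (\<psi> n')"
  proof (cases "n = n'")
    case True
    then show ?thesis
      using \<epsilon> psi_r_bounds[of n] L_admissible_self by simp
  next
    case False
    define k where "k = n' - n"
    have k: "1 \<le> k" "k \<le> n'" "n' - k = n"
      using assms False unfolding k_def by auto
    then have "\<Delta>d * real (k - 1) < D"
      using assms(2) unfolding k_def[symmetric] by (simp add: of_nat_diff)
    then have "k \<le> N_disc \<Delta>d \<Delta>"
      using assms(3) k \<Delta> by (intro le_N_disc) auto
    then have "\<psi> n' \<le> L_fun \<alpha> (\<psi> n) (budget \<epsilon>0 \<epsilon>1 k) (budget \<delta>0 \<delta>1 k)"
      using psi_r_le_L_fun[of k n'] k by simp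
    moreover have "\<psi> n \<le> \<psi> n'"
      using psi_r_mono assms(1) by blast
    ultimately have admissible: "L_admissible \<alpha> (\<psi> n) (budget \<epsilon>0 \<epsilon>1 k) (budget \<delta>0 \<delta>1 k) (\<psi> n')"
      using L_admissible_iff[OF \<alpha> budget_eps_nonneg budget_delta_pos] psi_r_bounds[of n] by simp
    have "(\<Delta>d * real (k - 1)) powr r \<le> D powr r"
      using \<open>\<Delta>d * real (k - 1) < D\<close> \<Delta> r by (intro powr_mono2) auto
    then show ?thesis
      using \<epsilon> \<delta> budget_delta_pos[of k]
      by (intro L_admissible_mono[OF admissible]) (auto intro: mult_left_mono)
  qed
  then show "approx_renyi (\<delta>0 + \<delta>1 * D powr r) \<alpha> (bernoulli_pmf (\<psi> n')) (bernoulli_pmf (\<psi> n))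
      \<le> ereal (\<epsilon>0 + \<epsilon>1 * D powr r)"
    and "approx_renyi (\<delta>0 + \<delta>1 * D powr r) \<alpha> (bernoulli_pmf (\<psi> n)) (bernoulli_pmf (\<psi> n'))
      \<le> ereal (\<epsilon>0 + \<epsilon>1 * D powr r)"
    unfolding L_admissible_def by auto
qed

lemma approx_renyi_phi_r_close:
  assumes "0 \<le> a" "0 \<le> a'" "\<bar>a - a'\<bar> \<le> D" "D \<le> \<Delta>"
  shows "approx_renyi (\<delta>0 + \<delta>1 * D powr r) \<alpha>
      (bernoulli_pmf (phi_r \<alpha> \<epsilon>0 \<delta>0 \<epsilon>1 \<delta>1 r \<Delta>d \<Delta> a)) (bernoulli_pmf (phi_r \<alpha> \<epsilon>0 \<delta>0 \<epsilon>1 \<delta>1 r \<Delta>d \<Delta> a'))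
      \<le> ereal (\<epsilon>0 + \<epsilon>1 * D powr r)"
proof -
  define n n' where "n = nat \<lfloor>a / \<Delta>d\<rfloor>" and "n' = nat \<lfloor>a' / \<Delta>d\<rfloor>"
  have "\<Delta>d * (real (n' - n) - 1) < D" "\<Delta>d * (real (n - n') - 1) < D"
    using nat_floor_divide_diff_less[of a a' \<Delta>d] nat_floor_divide_diff_less[of a' a \<Delta>d] assms \<Delta>
    unfolding n_def n'_def by (auto simp: abs_minus_commute)
  then show ?thesis
    using approx_renyi_psi_r_close[of n n' D] approx_renyi_psi_r_close[of n' n D] assms(4)
    unfolding phi_r_def n_def[symmetric] n'_def[symmetric] by (cases "n \<le> n'") auto
qed

end

theorem mainTheorem5:
  fixes \<alpha> \<epsilon>0 \<delta>0 r \<epsilon>1 \<delta>1 \<Delta>d \<Delta> \<Delta>inf :: real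
    and X X' :: "'u::finite \<Rightarrow> real" and u :: 'u
  assumes "\<alpha> > 1" and "\<epsilon>0 > 0" and "\<delta>0 > 0" and "r > 0" and "\<epsilon>1 > 0" and "\<delta>1 > 0"
    and "\<Delta>d > 0" and "\<Delta> > 0"
    and "\<forall>v. X v \<ge> 0" and "\<forall>v. X' v \<ge> 0"
    and "\<forall>v. v \<noteq> u \<longrightarrow> X v = X' v"
    and "\<bar>X u - X' u\<bar> \<le> \<Delta>inf" and "\<Delta>inf \<le> \<Delta>"
    and "\<delta>0 + \<delta>1 * \<Delta>inf powr r < 1"
  shows "max (approx_renyi (\<delta>0 + \<delta>1 * \<Delta>inf powr r) \<alpha>
                 (mech (phi_r \<alpha> \<epsilon>0 \<delta>0 \<epsilon>1 \<delta>1 r \<Delta>d \<Delta>) X) (mech (phi_r \<alpha> \<epsilon>0 \<delta>0 \<epsilon>1 \<delta>1 r \<Delta>d \<Delta>) X'))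
             (approx_renyi (\<delta>0 + \<delta>1 * \<Delta>inf powr r) \<alpha>
                 (mech (phi_r \<alpha> \<epsilon>0 \<delta>0 \<epsilon>1 \<delta>1 r \<Delta>d \<Delta>) X') (mech (phi_r \<alpha> \<epsilon>0 \<delta>0 \<epsilon>1 \<delta>1 r \<Delta>d \<Delta>) X))
         \<le> ereal (\<epsilon>0 + \<epsilon>1 * \<Delta>inf powr r)"
proof -
  let ?\<phi> = "phi_r \<alpha> \<epsilon>0 \<delta>0 \<epsilon>1 \<delta>1 r \<Delta>d \<Delta>"
  have mech_eq: "mech ?\<phi> Y = random_subset (\<lambda>v. bernoulli_pmf (?\<phi> (Y v)))" for Y :: "'u \<Rightarrow> real"
    unfolding mech_def random_subset_def ..
  have neighbours: "approx_renyi (\<delta>0 + \<delta>1 * \<Delta>inf powr r) \<alpha> (mech ?\<phi> Y) (mech ?\<phi> Y')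
      \<le> ereal (\<epsilon>0 + \<epsilon>1 * \<Delta>inf powr r)"
    if "\<forall>v. v \<noteq> u \<longrightarrow> Y v = Y' v" "\<bar>Y u - Y' u\<bar> \<le> \<Delta>inf" "0 \<le> Y u" "0 \<le> Y' u" for Y Y'
  proof -
    have "approx_renyi (\<delta>0 + \<delta>1 * \<Delta>inf powr r) \<alpha> (mech ?\<phi> Y) (mech ?\<phi> Y') \<le>
        approx_renyi (\<delta>0 + \<delta>1 * \<Delta>inf powr r) \<alpha> (bernoulli_pmf (?\<phi> (Y u))) (bernoulli_pmf (?\<phi> (Y' u)))"
      unfolding mech_eq by (rule approx_renyi_random_subset_le) (use that in simp)
    also have "\<dots> \<le> ereal (\<epsilon>0 + \<epsilon>1 * \<Delta>inf powr r)"
      using assms that by (intro approx_renyi_phi_r_close) auto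
    finally show ?thesis .
  qed
  show ?thesis
    using neighbours[of X X'] neighbours[of X' X] assms(9-13) by (auto simp: abs_minus_commute)
qed

end
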